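(* Let $G$ be a Garside group with Garside element $\Delta$, let $g\in G$, and let $a,b,k$ be nonzero integers. (i) If $g^{kb}$ is conjugate to $\Delta^{ka}$, then $g^b$ is conjugate to $\Delta^a$. (ii) If each of $g^a$ and $g^b$ is conjugate to a power of $\Delta$, then $g^{\gcd(a,b)}$ is conjugate to a power of $\Delta$.
   Context: $G$ is a Garside group: the group of fractions of a Garside monoid $G^+$ (an atomic, left and right cancellative monoid that is a lattice under both the prefix order and the suffix order, with a distinguished element $\Delta$, the Garside element, whose left and right divisors coincide, form a finite set, and generate $G^+$). *)

theory Defs
  imports "HOL-Algebra.Group"
begin

text \<open>Garside groups, presented as a group G together with a positive submonoid P
  (the Garside monoid G+) and a Garside element D, such that G is the group of
  fractions of P.\<close>

definition left_div :: "('a, 'b) monoid_scheme \<Rightarrow> 'a set \<Rightarrow> 'a \<Rightarrow> 'a \<Rightarrow> bool" where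
  "left_div G P x y \<longleftrightarrow> x \<in> P \<and> y \<in> P \<and> (\<exists>c\<in>P. y = x \<otimes>\<^bsub>G\<^esub> c)"

definition right_div :: "('a, 'b) monoid_scheme \<Rightarrow> 'a set \<Rightarrow> 'a \<Rightarrow> 'a \<Rightarrow> bool" where
  "right_div G P x y \<longleftrightarrow> x \<in> P \<and> y \<in> P \<and> (\<exists>c\<in>P. y = c \<otimes>\<^bsub>G\<^esub> x)"

definition lattice_on :: "'a set \<Rightarrow> ('a \<Rightarrow> 'a \<Rightarrow> bool) \<Rightarrow> bool" where
  "lattice_on P r \<longleftrightarrow>
     (\<forall>x\<in>P. \<forall>y\<in>P.
        (\<exists>j\<in>P. r x j \<and> r y j \<and> (\<forall>z\<in>P. r x z \<and> r y z \<longrightarrow> r j z)) \<and>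
        (\<exists>m\<in>P. r m x \<and> r m y \<and> (\<forall>z\<in>P. r z x \<and> r z y \<longrightarrow> r z m)))"

definition atomic_monoid :: "('a, 'b) monoid_scheme \<Rightarrow> 'a set \<Rightarrow> bool" where
  "atomic_monoid G P \<longleftrightarrow>
     (\<exists>\<nu> :: 'a \<Rightarrow> nat. (\<forall>x\<in>P. \<forall>y\<in>P. \<nu> (x \<otimes>\<^bsub>G\<^esub> y) \<ge> \<nu> x + \<nu> y) \<and>
                      (\<forall>x\<in>P. x \<noteq> \<one>\<^bsub>G\<^esub> \<longrightarrow> \<nu> x > 0))"

definition garside_group :: "('a, 'b) monoid_scheme \<Rightarrow> 'a set \<Rightarrow> 'a \<Rightarrow> bool" where
  "garside_group G P D \<longleftrightarrow>
     group G \<and>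
     P \<subseteq> carrier G \<and> \<one>\<^bsub>G\<^esub> \<in> P \<and> (\<forall>x\<in>P. \<forall>y\<in>P. x \<otimes>\<^bsub>G\<^esub> y \<in> P) \<and>
     atomic_monoid G P \<and>
     lattice_on P (left_div G P) \<and> lattice_on P (right_div G P) \<and>
     D \<in> P \<and>
     {x. left_div G P x D} = {x. right_div G P x D} \<and>
     finite {x. left_div G P x D} \<and>
     (\<forall>x\<in>P. \<exists>xs. set xs \<subseteq> {y. left_div G P y D} \<and> x = foldr (\<otimes>\<^bsub>G\<^esub>) xs \<one>\<^bsub>G\<^esub>) \<and>
     carrier G = {p \<otimes>\<^bsub>G\<^esub> inv\<^bsub>G\<^esub> q | p q. p \<in> P \<and> q \<in> P}"

definition conjugate :: "('a, 'b) monoid_scheme \<Rightarrow> 'a \<Rightarrow> 'a \<Rightarrow> bool" where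
  "conjugate G x y \<longleftrightarrow> (\<exists>h\<in>carrier G. h \<otimes>\<^bsub>G\<^esub> x \<otimes>\<^bsub>G\<^esub> inv\<^bsub>G\<^esub> h = y)"

end

theory Submission
  imports Defs
begin

text \<open>Conjugation by \<open>D\<close> permutes the finite set of divisors of \<open>D\<close>,
  hence preserves the positive monoid \<open>P\<close>, and some power of \<open>D\<close> is central.
  Every element becomes positive after left multiplication by a power of \<open>D\<close>, so
  the prefix order \<open>x \<preceq> y \<longleftrightarrow> inv x \<otimes> y \<in> P\<close> on the whole group has least upper
  bounds of finite nonempty sets.  If \<open>y [^] n = D [^] (n * a)\<close>, the finite set
  \<open>{y [^] k \<otimes> D [^] (- k * a) | k < n}\<close> is permuted by the order automorphism
  \<open>z \<mapsto> y \<otimes> z \<otimes> D [^] (- a)\<close>, which therefore fixes its least upper bound \<open>J\<close>;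
  this means \<open>inv J \<otimes> y \<otimes> J = D [^] a\<close>, giving part (i).  Part (ii) follows
  from (i), because distinct powers of \<open>D\<close> are never conjugate unless the group
  is trivial.\<close>

context group
begin

lemma inv_mult_cancel_left [simp]:
  "x \<in> carrier G \<Longrightarrow> y \<in> carrier G \<Longrightarrow> inv x \<otimes> (x \<otimes> y) = y"
  by (simp flip: m_assoc)

lemma mult_inv_cancel_left [simp]:
  "x \<in> carrier G \<Longrightarrow> y \<in> carrier G \<Longrightarrow> x \<otimes> (inv x \<otimes> y) = y"
  by (simp flip: m_assoc)

lemma conjugation_hom: "h \<in> carrier G \<Longrightarrow> (\<lambda>x. h \<otimes> x \<otimes> inv h) \<in> hom G G"
  unfolding hom_def by (auto simp: m_assoc)

lemma conjugation_int_pow: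
  assumes "h \<in> carrier G" "x \<in> carrier G"
  shows "(h \<otimes> x \<otimes> inv h) [^] (i::int) = h \<otimes> x [^] i \<otimes> inv h"
  using hom_int_pow[OF conjugation_hom[OF assms(1)] assms(2) is_group is_group] by simp

lemma commute_int_pow:
  assumes c: "c \<in> carrier G" and x: "x \<in> carrier G" and comm: "c \<otimes> x = x \<otimes> c"
  shows "c [^] (i::int) \<otimes> x = x \<otimes> c [^] i"
proof -
  have "x \<otimes> c \<otimes> inv x = c" using comm c x by (simp flip: comm add: m_assoc)
  hence "x \<otimes> c [^] i \<otimes> inv x = c [^] i" using conjugation_int_pow[OF x c] by simp
  hence "x \<otimes> c [^] i \<otimes> inv x \<otimes> x = c [^] i \<otimes> x" by simp
  thus ?thesis using c x by (simp add: m_assoc)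
qed

lemma conjugate_sym:
  assumes "conjugate G x y" "x \<in> carrier G" shows "conjugate G y x"
proof -
  obtain h where h: "h \<in> carrier G" "h \<otimes> x \<otimes> inv h = y" using assms(1) unfolding conjugate_def by blast
  have "inv h \<otimes> y \<otimes> inv (inv h) = x" using h assms(2) by (auto simp: m_assoc)
  thus ?thesis using h(1) unfolding conjugate_def by blast
qed

lemma conjugate_trans:
  assumes "conjugate G x y" "conjugate G y z" "x \<in> carrier G" shows "conjugate G x z"
proof -
  obtain h where h: "h \<in> carrier G" "h \<otimes> x \<otimes> inv h = y" using assms(1) unfolding conjugate_def by blast
  obtain h' where h': "h' \<in> carrier G" "h' \<otimes> y \<otimes> inv h' = z" using assms(2) unfolding conjugate_def by blast
  have "(h' \<otimes> h) \<otimes> x \<otimes> inv (h' \<otimes> h) = z"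
    using h h' assms(3) by (auto simp: m_assoc inv_mult_group)
  thus ?thesis using h h' unfolding conjugate_def by blast
qed

lemma conjugate_int_pow:
  assumes "conjugate G x y" "x \<in> carrier G" shows "conjugate G (x [^] (i::int)) (y [^] i)"
proof -
  obtain h where h: "h \<in> carrier G" "h \<otimes> x \<otimes> inv h = y" using assms(1) unfolding conjugate_def by blast
  thus ?thesis using conjugation_int_pow[OF h(1) assms(2), of i] unfolding conjugate_def by auto
qed

end

locale garside =
  fixes G (structure) and P :: "'a set" and D :: 'a
  assumes garside: "garside_group G P D"
begin

sublocale group G
  using garside unfolding garside_group_def by blast

abbreviation Div :: "'a set" where "Div \<equiv> {x. left_div G P x D}"

lemma positive_carrier: "x \<in> P \<Longrightarrow> x \<in> carrier G"
  using garside unfolding garside_group_def by blast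

lemma one_positive: "\<one> \<in> P"
  using garside unfolding garside_group_def by blast

lemma mult_positive: "x \<in> P \<Longrightarrow> y \<in> P \<Longrightarrow> x \<otimes> y \<in> P"
  using garside unfolding garside_group_def by blast

lemma Delta_positive: "D \<in> P"
  using garside unfolding garside_group_def by blast

lemma Delta_carrier [simp]: "D \<in> carrier G"
  using Delta_positive positive_carrier by blast

lemma Div_right: "Div = {x. right_div G P x D}"
  using garside unfolding garside_group_def by blast

lemma finite_Div: "finite Div"
  using garside unfolding garside_group_def by blast

lemma Div_positive: "s \<in> Div \<Longrightarrow> s \<in> P"
  by (simp add: left_div_def)

lemma Div_carrier: "s \<in> Div \<Longrightarrow> s \<in> carrier G"
  by (simp add: left_div_def positive_carrier)

lemma carrier_fractions: "x \<in> carrier G \<Longrightarrow> \<exists>p\<in>P. \<exists>q\<in>P. x = p \<otimes> inv q"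
  using garside unfolding garside_group_def by blast

lemma Delta_nat_pow_positive: "D [^] (n::nat) \<in> P"
  by (induction n) (auto simp: one_positive mult_positive Delta_positive)

lemma positive_induct [consumes 1, case_names one mult]:
  assumes "p \<in> P" and "Q \<one>"
    and "\<And>s x. s \<in> Div \<Longrightarrow> x \<in> P \<Longrightarrow> Q x \<Longrightarrow> Q (s \<otimes> x)"
  shows "Q p"
proof -
  obtain xs where xs: "set xs \<subseteq> Div" "p = foldr (\<otimes>) xs \<one>"
    using garside \<open>p \<in> P\<close> unfolding garside_group_def by blast
  have "foldr (\<otimes>) xs \<one> \<in> P \<and> Q (foldr (\<otimes>) xs \<one>)" using xs(1)
    by (induction xs) (auto simp: assms(2,3) one_positive mult_positive Div_positive)
  thus ?thesis using xs(2) by simp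
qed

text \<open>Atomicity implies that \<open>\<one>\<close> is the only invertible element of the positive
  monoid.\<close>

lemma positive_unit:
  assumes "w \<in> P" "inv w \<in> P" shows "w = \<one>"
proof -
  obtain \<nu> :: "'a \<Rightarrow> nat" where
    sup: "\<And>x y. x \<in> P \<Longrightarrow> y \<in> P \<Longrightarrow> \<nu> (x \<otimes> y) \<ge> \<nu> x + \<nu> y" and
    pos: "\<And>x. x \<in> P \<Longrightarrow> x \<noteq> \<one> \<Longrightarrow> \<nu> x > 0"
    using garside unfolding garside_group_def atomic_monoid_def by blast
  have "\<nu> \<one> = 0" using sup[OF one_positive one_positive] by simp
  moreover have "\<nu> (w \<otimes> inv w) \<ge> \<nu> w + \<nu> (inv w)" using sup assms by blast
  ultimately have "\<nu> w = 0" using assms positive_carrier by simp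
  thus ?thesis using pos assms(1) by fastforce
qed

lemma trivial_if_Delta_one:
  assumes "D = \<one>" shows "carrier G = {\<one>}"
proof -
  have Div_one: "s = \<one>" if s: "s \<in> Div" for s
  proof -
    obtain c where c: "c \<in> P" "\<one> = s \<otimes> c" "s \<in> P"
      using s assms unfolding left_div_def by auto
    have "inv s = inv s \<otimes> (s \<otimes> c)" unfolding c(2)[symmetric] using c(3) positive_carrier by simp
    also have "\<dots> = c" using c(1,3) positive_carrier by simp
    finally show ?thesis using positive_unit c by simp
  qed
  have "p = \<one>" if "p \<in> P" for p
    using that
  proof (induction rule: positive_induct)
    case (mult s x)
    thus ?case using Div_one[OF mult(1)] by simp
  qed simp
  hence "x = \<one>" if "x \<in> carrier G" for x
    using carrier_fractions[OF that] by (metis inv_one one_closed r_one)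
  thus ?thesis by auto
qed

text \<open>Conjugation by \<open>D\<close> and by its inverse permute the divisors of \<open>D\<close>:
  if \<open>D = c \<otimes> s\<close> and \<open>D = c' \<otimes> c\<close>, then \<open>D \<otimes> s \<otimes> inv D = c'\<close>, and symmetrically.\<close>

lemma Delta_conj_Div:
  assumes s: "s \<in> Div" shows "D \<otimes> s \<otimes> inv D \<in> Div"
proof -
  obtain c where c: "c \<in> P" "D = c \<otimes> s"
    using s Div_right unfolding right_div_def by blast
  hence "c \<in> Div" using s Delta_positive unfolding left_div_def by auto
  then obtain c' where c': "c' \<in> P" "D = c' \<otimes> c"
    using Div_right unfolding right_div_def by blast
  have carr: "c \<in> carrier G" "c' \<in> carrier G" "s \<in> carrier G"
    using c c' s positive_carrier Div_carrier by auto
  have "D \<otimes> s \<otimes> inv D = c' \<otimes> (c \<otimes> s) \<otimes> inv D" using c' carr by (simp add: m_assoc)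
  also have "\<dots> = c'" using c(2) carr by (simp add: m_assoc flip: c(2))
  finally have conj: "D \<otimes> s \<otimes> inv D = c'" .
  have "left_div G P c' D" using c c' Delta_positive unfolding left_div_def by blast
  thus ?thesis using conj by simp
qed

lemma Delta_inv_conj_Div:
  assumes s: "s \<in> Div" shows "inv D \<otimes> s \<otimes> D \<in> Div"
proof -
  obtain c where c: "c \<in> P" "D = s \<otimes> c"
    using s unfolding left_div_def by blast
  hence "c \<in> {x. right_div G P x D}" using s Delta_positive unfolding right_div_def left_div_def by auto
  then obtain c' where c': "c' \<in> P" "D = c \<otimes> c'"
    using Div_right unfolding left_div_def by blast
  have carr: "c \<in> carrier G" "c' \<in> carrier G" "s \<in> carrier G"
    using c c' s positive_carrier Div_carrier by auto
  have "inv D \<otimes> s \<otimes> D = inv (s \<otimes> c) \<otimes> s \<otimes> (c \<otimes> c')" using c(2) c'(2) by simp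
  also have "\<dots> = c'" using carr by (simp add: m_assoc inv_mult_group)
  finally have conj: "inv D \<otimes> s \<otimes> D = c'" .
  have "right_div G P c' D" using c c' Delta_positive unfolding right_div_def by blast
  thus ?thesis using conj Div_right by simp
qed

lemma Delta_pow_conj_Div:
  "s \<in> Div \<Longrightarrow> D [^] (i::int) \<otimes> s \<otimes> inv (D [^] i) \<in> Div"
proof (induction i arbitrary: s rule: int_induct[where k = 0])
  case base
  thus ?case using Div_carrier by simp
next
  case (step1 i)
  have "D [^] (i + 1) \<otimes> s \<otimes> inv (D [^] (i + 1)) = D [^] i \<otimes> (D \<otimes> s \<otimes> inv D) \<otimes> inv (D [^] i)"
    using step1.prems Div_carrier by (simp add: int_pow_mult m_assoc inv_mult_group)
  thus ?case using step1.IH Delta_conj_Div step1.prems by simp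
next
  case (step2 i)
  have "D [^] (i - 1) \<otimes> s \<otimes> inv (D [^] (i - 1)) = D [^] i \<otimes> (inv D \<otimes> s \<otimes> D) \<otimes> inv (D [^] i)"
    using step2.prems Div_carrier by (simp add: int_pow_diff m_assoc inv_mult_group)
  thus ?case using step2.IH Delta_inv_conj_Div step2.prems by simp
qed

text \<open>An inner automorphism that permutes the divisors of \<open>D\<close> preserves the
  positive monoid, since the divisors generate it.\<close>

lemma conj_positive:
  assumes w: "w \<in> carrier G" and Div_stable: "\<And>s. s \<in> Div \<Longrightarrow> w \<otimes> s \<otimes> inv w \<in> Div"
    and p: "p \<in> P"
  shows "w \<otimes> p \<otimes> inv w \<in> P"
  using p
proof (induction rule: positive_induct)
  case one
  thus ?case using w one_positive by simp
next
  case (mult s x)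
  have "w \<otimes> (s \<otimes> x) \<otimes> inv w = (w \<otimes> s \<otimes> inv w) \<otimes> (w \<otimes> x \<otimes> inv w)"
    using w mult.hyps Div_carrier positive_carrier by (simp add: m_assoc)
  thus ?case using mult Div_stable Div_positive mult_positive by simp
qed

lemma Delta_pow_conj_positive:
  "p \<in> P \<Longrightarrow> D [^] (i::int) \<otimes> p \<otimes> inv (D [^] i) \<in> P"
  using conj_positive Delta_pow_conj_Div by simp

text \<open>Conjugation by \<open>D\<close> permutes the finite set \<open>Div\<close>, so by the pigeonhole
  principle some positive power of \<open>D\<close> acts trivially on it.\<close>

lemma Delta_pow_commutes_Div:
  "\<exists>e::nat. e > 0 \<and> (\<forall>s\<in>Div. D [^] e \<otimes> s = s \<otimes> D [^] e)"
proof -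
  define f where "f n = restrict (\<lambda>s. D [^] (n::nat) \<otimes> s \<otimes> inv (D [^] n)) Div" for n
  have "f n \<in> Div \<rightarrow>\<^sub>E Div" for n
    using Delta_pow_conj_Div[of _ "int n"] unfolding f_def by (simp add: int_pow_int)
  hence "finite (range f)"
    using finite_subset[of "range f" "Div \<rightarrow>\<^sub>E Div"] finite_Div by (auto simp: finite_PiE)
  then obtain n0 where "infinite {n. f n = f n0}"
    using pigeonhole_infinite[of "UNIV :: nat set" f] by auto
  then obtain n where n: "n > n0" "f n = f n0"
    using finite_nat_set_iff_bounded_le[of "{n. f n = f n0}"] by (meson mem_Collect_eq not_le)
  define e where "e = n - n0"
  have e: "e > 0" "D [^] n = D [^] n0 \<otimes> D [^] e"
    using n(1) by (simp_all add: e_def nat_pow_mult)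
  have "D [^] e \<otimes> s = s \<otimes> D [^] e" if s: "s \<in> Div" for s
  proof -
    have sc: "s \<in> carrier G" using s Div_carrier by blast
    have "D [^] n \<otimes> s \<otimes> inv (D [^] n) = D [^] n0 \<otimes> s \<otimes> inv (D [^] n0)"
      using fun_cong[OF n(2), of s] s unfolding f_def by simp
    hence "D [^] n0 \<otimes> (D [^] e \<otimes> s \<otimes> inv (D [^] e)) \<otimes> inv (D [^] n0)
           = D [^] n0 \<otimes> s \<otimes> inv (D [^] n0)"
      unfolding e(2) using sc by (simp add: m_assoc inv_mult_group)
    hence "D [^] e \<otimes> s \<otimes> inv (D [^] e) = s" using sc by simp
    hence "D [^] e \<otimes> s \<otimes> inv (D [^] e) \<otimes> D [^] e = s \<otimes> D [^] e" by simp
    thus ?thesis using sc by (simp add: m_assoc)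
  qed
  thus ?thesis using e(1) by blast
qed

text \<open>A power of \<open>D\<close> commuting with the divisors of \<open>D\<close> commutes with the
  positive monoid they generate, and hence with all fractions \<open>p \<otimes> inv q\<close>.\<close>

lemma Delta_pow_central:
  "\<exists>e::nat. e > 0 \<and> (\<forall>x\<in>carrier G. D [^] e \<otimes> x = x \<otimes> D [^] e)"
proof -
  obtain e :: nat where e: "e > 0" "\<And>s. s \<in> Div \<Longrightarrow> D [^] e \<otimes> s = s \<otimes> D [^] e"
    using Delta_pow_commutes_Div by blast
  let ?c = "D [^] e"
  have c: "?c \<in> carrier G" by simp
  have positive: "?c \<otimes> p = p \<otimes> ?c" if "p \<in> P" for p
    using that
  proof (induction rule: positive_induct)
    case (mult s x)
    have s: "s \<in> carrier G" using mult.hyps Div_carrier by blast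
    have x: "x \<in> carrier G" using mult.hyps positive_carrier by blast
    have "?c \<otimes> (s \<otimes> x) = s \<otimes> (?c \<otimes> x)" using e(2)[OF mult.hyps(1)] s x by (simp flip: m_assoc)
    thus ?case using mult.IH s x by (simp add: m_assoc)
  qed simp
  have "?c \<otimes> x = x \<otimes> ?c" if x: "x \<in> carrier G" for x
  proof -
    obtain p q where pq: "p \<in> P" "q \<in> P" "x = p \<otimes> inv q" using carrier_fractions[OF x] by blast
    have carr: "p \<in> carrier G" "q \<in> carrier G" using pq positive_carrier by auto
    have "q [^] (-1::int) \<otimes> ?c = ?c \<otimes> q [^] (-1::int)"
      using commute_int_pow[OF carr(2) c positive[OF pq(2), symmetric]] .
    hence q': "?c \<otimes> inv q = inv q \<otimes> ?c" using carr by (simp add: int_pow_neg)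
    have "?c \<otimes> (p \<otimes> inv q) = p \<otimes> (?c \<otimes> inv q)"
      using positive[OF pq(1)] carr by (simp flip: m_assoc)
    also have "\<dots> = p \<otimes> inv q \<otimes> ?c" unfolding q' using carr by (simp add: m_assoc)
    finally show ?thesis unfolding pq(3) .
  qed
  thus ?thesis using e(1) by blast
qed

text \<open>Inductively, if
  \<open>r \<otimes> x = D [^] m\<close> and \<open>D = u \<otimes> s\<close>, then the central power \<open>D [^] e\<close> gives
  \<open>(r \<otimes> D [^] (e - 1) \<otimes> u) \<otimes> (s \<otimes> x) = D [^] (m + e)\<close>.\<close>

lemma positive_right_divides_Delta_pow:
  assumes "q \<in> P" shows "\<exists>r\<in>P. \<exists>m::nat. r \<otimes> q = D [^] m"
proof -
  obtain e :: nat where e: "e > 0" "\<And>x. x \<in> carrier G \<Longrightarrow> D [^] e \<otimes> x = x \<otimes> D [^] e"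
    using Delta_pow_central by blast
  show ?thesis
    using assms
  proof (induction rule: positive_induct)
    case one
    show ?case using one_positive by (intro bexI[of _ \<one>] exI[of _ 0]) auto
  next
    case (mult s x)
    then obtain r and m :: nat where r: "r \<in> P" "r \<otimes> x = D [^] m" by blast
    obtain u where u: "u \<in> P" "D = u \<otimes> s"
      using mult.hyps(1) Div_right unfolding right_div_def by blast
    have carr: "s \<in> carrier G" "x \<in> carrier G" "u \<in> carrier G" "r \<in> carrier G"
      using mult.hyps u r Div_carrier positive_carrier by auto
    have De: "D [^] (e - 1) \<otimes> (u \<otimes> s) = D [^] e"
      using e(1) by (simp flip: u(2) nat_pow_Suc)
    have "(r \<otimes> D [^] (e - 1) \<otimes> u) \<otimes> (s \<otimes> x) = r \<otimes> (D [^] (e - 1) \<otimes> (u \<otimes> s)) \<otimes> x"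
      using carr by (simp add: m_assoc)
    also have "\<dots> = r \<otimes> (x \<otimes> D [^] e)" unfolding De using carr e(2) by (simp add: m_assoc)
    also have "\<dots> = D [^] (m + e)" using carr r(2) by (simp flip: m_assoc add: nat_pow_mult)
    finally show ?case
      using r(1) u(1) Delta_nat_pow_positive mult_positive by blast
  qed
qed

text \<open>Every element of the group becomes positive after left multiplication by a
  suitable power of \<open>D\<close>: for \<open>x = p \<otimes> inv q\<close> with \<open>r \<otimes> q = D [^] m\<close>, a central
  power \<open>D [^] (e * m)\<close> moves past \<open>p\<close> and absorbs \<open>inv q\<close>.\<close>

lemma Delta_pow_mult_positive:
  assumes x: "x \<in> carrier G" shows "\<exists>M::nat. D [^] M \<otimes> x \<in> P"
proof -
  obtain e :: nat where e: "e > 0" "\<And>x. x \<in> carrier G \<Longrightarrow> D [^] e \<otimes> x = x \<otimes> D [^] e"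
    using Delta_pow_central by blast
  obtain p q where pq: "p \<in> P" "q \<in> P" "x = p \<otimes> inv q" using carrier_fractions[OF x] by blast
  obtain r m where rm: "r \<in> P" "r \<otimes> q = D [^] (m::nat)"
    using positive_right_divides_Delta_pow[OF pq(2)] by blast
  have carr: "p \<in> carrier G" "q \<in> carrier G" "r \<in> carrier G" using pq rm positive_carrier by auto
  have central: "D [^] (e * m) \<otimes> p = p \<otimes> D [^] (e * m)"
    using group_commutes_pow[OF e(2)[OF carr(1)], of m] carr by (simp add: nat_pow_pow)
  have split: "D [^] (e * m) = D [^] (e * m - m) \<otimes> D [^] m"
    using e(1) by (simp add: nat_pow_mult)
  have "D [^] (e * m) \<otimes> x = p \<otimes> (D [^] (e * m - m) \<otimes> (r \<otimes> q) \<otimes> inv q)"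
    unfolding pq(3) rm(2) using central carr by (simp add: m_assoc split flip: m_assoc)
  also have "\<dots> = p \<otimes> (D [^] (e * m - m) \<otimes> r)" using carr by (simp add: m_assoc)
  finally show ?thesis
    using pq(1) rm(1) Delta_nat_pow_positive mult_positive by metis
qed

text \<open>A single power of \<open>D\<close> works for a finite set, as larger powers keep
  products positive.\<close>

lemma Delta_pow_mult_positive_finite:
  assumes "finite S" "S \<subseteq> carrier G" shows "\<exists>M::nat. \<forall>x\<in>S. D [^] M \<otimes> x \<in> P"
  using assms
proof (induction S rule: finite_induct)
  case (insert x S)
  obtain M :: nat where M: "\<forall>y\<in>S. D [^] M \<otimes> y \<in> P" using insert by auto
  obtain N :: nat where N: "D [^] N \<otimes> x \<in> P" using Delta_pow_mult_positive insert.prems by auto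
  have raise: "D [^] (K + L) \<otimes> y \<in> P" if "D [^] L \<otimes> y \<in> P" "y \<in> carrier G" for K L :: nat and y
  proof -
    have "D [^] (K + L) \<otimes> y = D [^] K \<otimes> (D [^] L \<otimes> y)" using that by (simp add: nat_pow_mult flip: m_assoc)
    thus ?thesis using that Delta_nat_pow_positive mult_positive by simp
  qed
  have "\<forall>y\<in>insert x S. D [^] (M + N) \<otimes> y \<in> P"
    using raise[OF N, of M] raise[of M _ N] M insert.prems by (auto simp: add.commute)
  thus ?case by blast
qed simp

text \<open>It is invariant under left
  multiplication and, since conjugation by powers of \<open>D\<close> preserves \<open>P\<close>, under
  right multiplication by powers of \<open>D\<close>.\<close>

definition prefix_le :: "'a \<Rightarrow> 'a \<Rightarrow> bool" (infix "\<preceq>" 50) where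
  "x \<preceq> y \<longleftrightarrow> x \<in> carrier G \<and> y \<in> carrier G \<and> inv x \<otimes> y \<in> P"

lemma prefix_le_antisym:
  assumes "x \<preceq> y" "y \<preceq> x" shows "x = y"
proof -
  have carr: "x \<in> carrier G" "y \<in> carrier G" and pos: "inv x \<otimes> y \<in> P" "inv y \<otimes> x \<in> P"
    using assms unfolding prefix_le_def by auto
  have "inv (inv x \<otimes> y) = inv y \<otimes> x" using carr by (simp add: inv_mult_group)
  hence "inv x \<otimes> y = \<one>" using positive_unit[OF pos(1)] pos(2) by simp
  hence "x \<otimes> (inv x \<otimes> y) = x" using carr by simp
  thus ?thesis using carr by simp
qed

lemma prefix_le_trans:
  assumes "x \<preceq> y" "y \<preceq> z" shows "x \<preceq> z"
proof -
  have carr: "x \<in> carrier G" "y \<in> carrier G" "z \<in> carrier G"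
    using assms unfolding prefix_le_def by auto
  have "inv x \<otimes> z = (inv x \<otimes> y) \<otimes> (inv y \<otimes> z)" using carr by (simp add: m_assoc)
  thus ?thesis using assms carr mult_positive unfolding prefix_le_def by simp
qed

lemma left_div_iff_prefix_le:
  "left_div G P x y \<longleftrightarrow> x \<in> P \<and> y \<in> P \<and> x \<preceq> y"
proof -
  have "(\<exists>c\<in>P. y = x \<otimes> c) \<longleftrightarrow> inv x \<otimes> y \<in> P" if "x \<in> P" "y \<in> P"
    using that positive_carrier by (metis inv_mult_cancel_left inv_solve_left')
  thus ?thesis unfolding left_div_def prefix_le_def using positive_carrier by blast
qed

lemma prefix_le_left_mult:
  assumes "w \<in> carrier G" "x \<in> carrier G" "y \<in> carrier G"
  shows "w \<otimes> x \<preceq> w \<otimes> y \<longleftrightarrow> x \<preceq> y"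
  using assms unfolding prefix_le_def by (simp add: inv_mult_group m_assoc)

lemma prefix_le_shift:
  assumes "w \<in> carrier G" "x \<in> carrier G" "y \<in> carrier G"
  shows "w \<otimes> x \<preceq> y \<longleftrightarrow> x \<preceq> inv w \<otimes> y"
proof -
  have "inv (w \<otimes> x) \<otimes> y = inv x \<otimes> (inv w \<otimes> y)"
    using assms by (simp add: inv_mult_group m_assoc)
  thus ?thesis using assms unfolding prefix_le_def by simp
qed

lemma prefix_le_right_Delta_pow:
  assumes x: "x \<in> carrier G" and y: "y \<in> carrier G"
  shows "x \<otimes> D [^] (c::int) \<preceq> y \<otimes> D [^] c \<longleftrightarrow> x \<preceq> y"
proof -
  have conj: "inv (x \<otimes> D [^] c) \<otimes> (y \<otimes> D [^] c) = D [^] (-c) \<otimes> (inv x \<otimes> y) \<otimes> inv (D [^] (-c))"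
    using x y by (simp add: inv_mult_group m_assoc int_pow_neg)
  have undo: "D [^] c \<otimes> (D [^] (-c) \<otimes> (inv x \<otimes> y) \<otimes> inv (D [^] (-c))) \<otimes> inv (D [^] c) = inv x \<otimes> y"
    using x y by (simp add: m_assoc int_pow_neg)
  have "D [^] (-c) \<otimes> (inv x \<otimes> y) \<otimes> inv (D [^] (-c)) \<in> P \<longleftrightarrow> inv x \<otimes> y \<in> P"
    using Delta_pow_conj_positive[of "D [^] (-c) \<otimes> (inv x \<otimes> y) \<otimes> inv (D [^] (-c))" c]
      Delta_pow_conj_positive[of "inv x \<otimes> y" "-c"] undo by auto
  thus ?thesis unfolding prefix_le_def conj using x y by simp
qed

definition prefix_lub :: "'a set \<Rightarrow> 'a \<Rightarrow> bool" where
  "prefix_lub S J \<longleftrightarrow> J \<in> carrier G \<and> (\<forall>s\<in>S. s \<preceq> J) \<and> (\<forall>z\<in>carrier G. (\<forall>s\<in>S. s \<preceq> z) \<longrightarrow> J \<preceq> z)"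

lemma prefix_lub_unique:
  assumes "prefix_lub S J" "prefix_lub S J'" shows "J = J'"
proof (rule prefix_le_antisym)
  show "J \<preceq> J'" using assms unfolding prefix_lub_def by simp
  show "J' \<preceq> J" using assms unfolding prefix_lub_def by simp
qed

lemma positive_join:
  assumes "finite S" "S \<noteq> {}" "S \<subseteq> P"
  shows "\<exists>L\<in>P. (\<forall>s\<in>S. s \<preceq> L) \<and> (\<forall>z\<in>P. (\<forall>s\<in>S. s \<preceq> z) \<longrightarrow> L \<preceq> z)"
  using assms
proof (induction S rule: finite_ne_induct)
  case (singleton x)
  have "x \<preceq> x" using singleton positive_carrier one_positive unfolding prefix_le_def by simp
  thus ?case using singleton by auto
next
  case (insert x S)
  then obtain L where L: "L \<in> P" "\<forall>s\<in>S. s \<preceq> L" "\<forall>z\<in>P. (\<forall>s\<in>S. s \<preceq> z) \<longrightarrow> L \<preceq> z"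
    by auto
  have x: "x \<in> P" using insert.prems by simp
  have lattice: "lattice_on P (left_div G P)"
    using garside unfolding garside_group_def by blast
  obtain j where "j \<in> P" "left_div G P x j" "left_div G P L j"
    "\<forall>z\<in>P. left_div G P x z \<and> left_div G P L z \<longrightarrow> left_div G P j z"
    using bspec[OF bspec[OF lattice[unfolded lattice_on_def] x] L(1)] by blast
  hence j: "j \<in> P" "x \<preceq> j" "L \<preceq> j" "\<And>z. z \<in> P \<Longrightarrow> x \<preceq> z \<Longrightarrow> L \<preceq> z \<Longrightarrow> j \<preceq> z"
    using x L(1) unfolding left_div_iff_prefix_le by auto
  have "\<forall>s\<in>insert x S. s \<preceq> j" using j(2,3) L(2) prefix_le_trans by blast
  moreover have "j \<preceq> z" if "z \<in> P" "\<forall>s\<in>insert x S. s \<preceq> z" for z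
    using that j(4) L(3) by simp
  ultimately show ?case using j(1) by blast
qed

text \<open>Least upper bounds of finite nonempty sets: shift the set into \<open>P\<close> by a power
  of \<open>D\<close>, take the join there, and shift back.\<close>

lemma prefix_lub_exists:
  assumes S: "finite S" "S \<noteq> {}" "S \<subseteq> carrier G" shows "\<exists>J. prefix_lub S J"
proof -
  obtain M :: nat where M: "\<forall>x\<in>S. D [^] M \<otimes> x \<in> P"
    using Delta_pow_mult_positive_finite S by blast
  let ?w = "D [^] M"
  have w: "?w \<in> carrier G" by simp
  obtain L where L: "L \<in> P" "\<forall>s\<in>S. ?w \<otimes> s \<preceq> L" "\<forall>z\<in>P. (\<forall>s\<in>S. ?w \<otimes> s \<preceq> z) \<longrightarrow> L \<preceq> z"
    using positive_join[of "(\<otimes>) ?w ` S"] S M by auto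
  have carrL: "L \<in> carrier G" using L(1) positive_carrier by blast
  have "prefix_lub S (inv ?w \<otimes> L)"
    unfolding prefix_lub_def
  proof (intro conjI ballI impI)
    show "inv ?w \<otimes> L \<in> carrier G" using carrL by simp
  next
    fix s assume "s \<in> S"
    thus "s \<preceq> inv ?w \<otimes> L" using L(2) S(3) carrL prefix_le_shift[OF w] by blast
  next
    fix z assume z: "z \<in> carrier G" "\<forall>s\<in>S. s \<preceq> z"
    obtain s where s: "s \<in> S" "s \<in> carrier G" using S(2,3) by blast
    have "?w \<otimes> z = (?w \<otimes> s) \<otimes> (inv s \<otimes> z)" using s z by (simp add: m_assoc)
    hence "?w \<otimes> z \<in> P" using M s z mult_positive unfolding prefix_le_def by simp
    moreover have "\<forall>s\<in>S. ?w \<otimes> s \<preceq> ?w \<otimes> z" using z S(3) prefix_le_left_mult[OF w] by auto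
    ultimately have "L \<preceq> ?w \<otimes> z" using L(3) by blast
    thus "inv ?w \<otimes> L \<preceq> z" using z carrL prefix_le_shift[of "inv ?w" L z] by simp
  qed
  thus ?thesis by blast
qed

lemma prefix_lub_twist:
  assumes lub: "prefix_lub S J" and S: "S \<subseteq> carrier G" and y: "y \<in> carrier G"
  shows "prefix_lub ((\<lambda>z. y \<otimes> z \<otimes> D [^] (c::int)) ` S) (y \<otimes> J \<otimes> D [^] c)"
proof -
  let ?\<phi> = "\<lambda>z. y \<otimes> z \<otimes> D [^] c"
  have mono: "?\<phi> u \<preceq> ?\<phi> v \<longleftrightarrow> u \<preceq> v" if "u \<in> carrier G" "v \<in> carrier G" for u v
    using that y prefix_le_right_Delta_pow prefix_le_left_mult by simp
  have inverse: "?\<phi> (inv y \<otimes> z \<otimes> D [^] (-c)) = z" if "z \<in> carrier G" for z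
    using that y by (simp add: m_assoc int_pow_neg)
  have J: "J \<in> carrier G" using lub unfolding prefix_lub_def by blast
  show ?thesis
    unfolding prefix_lub_def
  proof (intro conjI ballI impI)
    show "?\<phi> J \<in> carrier G" using J y by simp
  next
    fix t assume "t \<in> ?\<phi> ` S"
    thus "t \<preceq> ?\<phi> J" using lub S J mono unfolding prefix_lub_def by auto
  next
    fix z assume z: "z \<in> carrier G" "\<forall>t\<in>?\<phi> ` S. t \<preceq> z"
    let ?z' = "inv y \<otimes> z \<otimes> D [^] (-c)"
    have z': "?z' \<in> carrier G" using z y by simp
    have "\<forall>s\<in>S. s \<preceq> ?z'" using z mono[OF _ z'] inverse S by auto
    hence "J \<preceq> ?z'" using lub z' unfolding prefix_lub_def by blast
    thus "?\<phi> J \<preceq> z" using mono[OF J z'] inverse[OF z(1)] by simp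
  qed
qed

lemma twist_fixed_point:
  assumes S: "finite S" "S \<noteq> {}" "S \<subseteq> carrier G" and y: "y \<in> carrier G"
    and invariant: "(\<lambda>z. y \<otimes> z \<otimes> D [^] (c::int)) ` S = S"
  shows "\<exists>J\<in>carrier G. y \<otimes> J \<otimes> D [^] c = J"
proof -
  obtain J where J: "prefix_lub S J" using prefix_lub_exists[OF S] by blast
  have "prefix_lub S (y \<otimes> J \<otimes> D [^] c)"
    using prefix_lub_twist[OF J S(3) y, of c] unfolding invariant .
  hence "y \<otimes> J \<otimes> D [^] c = J" using prefix_lub_unique[OF _ J] by blast
  moreover have "J \<in> carrier G" using J unfolding prefix_lub_def by blast
  ultimately show ?thesis by blast
qed

text \<open>The elements
  \<open>orb k = y [^] k \<otimes> D [^] (- k * a)\<close>, \<open>k < n\<close>, form a finite set \<open>S\<close> that the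
  map \<open>\<phi> z = y \<otimes> z \<otimes> D [^] (- a)\<close> permutes, because \<open>\<phi> (orb k) = orb (k + 1)\<close>
  and \<open>orb n = orb 0\<close>.  A fixed point \<open>J\<close> of \<open>\<phi>\<close> satisfies
  \<open>inv J \<otimes> y \<otimes> J = D [^] a\<close>.\<close>

lemma Delta_root_conjugate_nat:
  assumes y: "y \<in> carrier G" and n: "n > (0::nat)" and root: "y [^] n = D [^] (int n * (a::int))"
  shows "conjugate G y (D [^] a)"
proof -
  define orb where "orb k = y [^] (k::nat) \<otimes> D [^] (- (int k * a))" for k
  let ?\<phi> = "\<lambda>z. y \<otimes> z \<otimes> D [^] (-a)"
  have orbit_step: "?\<phi> (orb k) = orb (Suc k)" for k
  proof -
    have pow_y: "y \<otimes> y [^] k = y [^] Suc k" by (rule nat_pow_Suc2[OF y, symmetric])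
    have pow_D: "D [^] (- (int k * a)) \<otimes> D [^] (-a) = D [^] (- (int (Suc k) * a))"
      by (simp add: int_pow_mult[symmetric] algebra_simps)
    have "?\<phi> (orb k) = (y \<otimes> y [^] k) \<otimes> (D [^] (- (int k * a)) \<otimes> D [^] (-a))"
      unfolding orb_def using y by (simp add: m_assoc)
    thus ?thesis unfolding pow_y pow_D orb_def .
  qed
  have orbit_period: "orb n = orb 0"
    unfolding orb_def root by (simp add: int_pow_neg)
  define S where "S = orb ` {..<n}"
  have S: "finite S" "S \<noteq> {}" "S \<subseteq> carrier G"
    unfolding S_def orb_def using n y by auto
  have split_n: "{1..n} = insert n {1..<n}" and split_0: "{..<n} = insert 0 {1..<n}"
    using n by auto
  have "?\<phi> ` S = orb ` Suc ` {..<n}"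
    unfolding S_def image_image orbit_step ..
  also have "\<dots> = insert (orb n) (orb ` {1..<n})"
    unfolding image_Suc_lessThan split_n by simp
  also have "\<dots> = S" unfolding S_def orbit_period split_0 by simp
  finally obtain J where J: "J \<in> carrier G" "?\<phi> J = J"
    using twist_fixed_point[OF S y] by blast
  have "inv J \<otimes> (?\<phi> J) \<otimes> D [^] a = inv J \<otimes> y \<otimes> J"
    using y J(1) by (simp add: m_assoc int_pow_neg)
  hence "inv J \<otimes> y \<otimes> inv (inv J) = D [^] a" unfolding J(2) using J(1) by simp
  thus ?thesis using J(1) unfolding conjugate_def by blast
qed

lemma Delta_root_conjugate:
  assumes y: "y \<in> carrier G" and k: "k \<noteq> 0" and root: "y [^] k = D [^] (k * (a::int))"
  shows "conjugate G y (D [^] a)"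
proof (cases "k > 0")
  case True
  hence "y [^] nat k = D [^] (int (nat k) * a)" using root by simp
  from Delta_root_conjugate_nat[OF y _ this] True show ?thesis by simp
next
  case False
  have "y [^] (-k) = D [^] (-k * a)" using root y by (simp add: int_pow_neg)
  hence "y [^] nat (-k) = D [^] (int (nat (-k)) * a)" using False by simp
  from Delta_root_conjugate_nat[OF y _ this] False k show ?thesis by simp
qed

lemma conjugate_root_Delta_pow:
  assumes z: "z \<in> carrier G" and k: "k \<noteq> 0"
    and conj: "conjugate G (z [^] k) (D [^] (k * (a::int)))"
  shows "conjugate G z (D [^] a)"
proof -
  obtain h where h: "h \<in> carrier G" "h \<otimes> z [^] k \<otimes> inv h = D [^] (k * a)"
    using conj unfolding conjugate_def by blast
  let ?y = "h \<otimes> z \<otimes> inv h"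
  have "?y [^] k = D [^] (k * a)" using conjugation_int_pow[OF h(1) z] h(2) by simp
  hence "conjugate G ?y (D [^] a)" using Delta_root_conjugate[OF _ k] h(1) z by simp
  moreover have "conjugate G z ?y" using h(1) unfolding conjugate_def by blast
  ultimately show ?thesis using conjugate_trans z by blast
qed

text \<open>In a nontrivial Garside group \<open>D\<close> has infinite order, and distinct powers of
  \<open>D\<close> are not conjugate (a central power of \<open>D\<close> would otherwise have finite
  order).\<close>

lemma Delta_torsion_trivial:
  assumes t: "t \<noteq> 0" and torsion: "D [^] (t::int) = \<one>" shows "carrier G = {\<one>}"
proof -
  have "D [^] nat \<bar>t\<bar> = \<one>"
  proof (cases "t > 0")
    case False
    hence "D [^] (-t) = \<one>" using torsion by (simp add: int_pow_neg)
    thus ?thesis using False by simp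
  qed (use torsion in \<open>simp add: pow_nat\<close>)
  moreover have "nat \<bar>t\<bar> = Suc (nat \<bar>t\<bar> - 1)" using t by simp
  ultimately have "D [^] (nat \<bar>t\<bar> - 1) \<otimes> D = \<one>" by (metis nat_pow_Suc)
  hence "inv D = D [^] (nat \<bar>t\<bar> - 1)" using inv_equality by simp
  hence "D = \<one>" using positive_unit[OF Delta_positive] Delta_nat_pow_positive by simp
  thus ?thesis by (rule trivial_if_Delta_one)
qed

lemma Delta_pow_conjugate_eq:
  assumes "conjugate G (D [^] (p::int)) (D [^] q)" shows "p = q \<or> carrier G = {\<one>}"
proof -
  obtain e :: nat where e: "e > 0" "\<And>x. x \<in> carrier G \<Longrightarrow> D [^] e \<otimes> x = x \<otimes> D [^] e"
    using Delta_pow_central by blast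
  obtain h where h: "h \<in> carrier G" "h \<otimes> D [^] p \<otimes> inv h = D [^] q"
    using assms unfolding conjugate_def by blast
  have "h \<otimes> D [^] (p * int e) \<otimes> inv h = D [^] (q * int e)"
    using conjugation_int_pow[OF h(1), of "D [^] p" "int e"] h(2) by (simp add: int_pow_pow)
  moreover have "(D [^] int e) [^] p \<otimes> h = h \<otimes> (D [^] int e) [^] p"
    using commute_int_pow[of "D [^] e" h p] e(2) h(1) by (simp add: int_pow_int)
  hence "D [^] (p * int e) \<otimes> h = h \<otimes> D [^] (p * int e)" by (simp add: int_pow_pow mult.commute)
  ultimately have "D [^] (p * int e) = D [^] (q * int e)"
    using h(1) by (metis inv_solve_right' int_pow_closed Delta_carrier m_closed)
  hence "D [^] (p * int e - q * int e) = \<one>" by (simp add: int_pow_diff)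
  moreover have "p \<noteq> q \<Longrightarrow> p * int e - q * int e \<noteq> 0" using e(1) by simp
  ultimately show ?thesis using Delta_torsion_trivial by blast
qed

text \<open>Write \<open>a = d * a'\<close>, \<open>b = d * b'\<close> with
  \<open>d = gcd a b\<close>.  Raising the two conjugacies to the powers \<open>b'\<close> and \<open>a'\<close> gives
  \<open>D [^] (m1 * b')\<close> conjugate to \<open>D [^] (m2 * a')\<close>, so \<open>m1 * b' = m2 * a'\<close> and, by
  coprimality, \<open>m1 = a' * c\<close>; part (i) then extracts the \<open>a'\<close>-th root.\<close>

lemma gcd_power_conjugate:
  fixes a b m1 m2 :: int
  assumes g: "g \<in> carrier G" and a: "a \<noteq> 0"
    and m1: "conjugate G (g [^] a) (D [^] m1)"
    and m2: "conjugate G (g [^] b) (D [^] m2)"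
  shows "\<exists>m::int. conjugate G (g [^] gcd a b) (D [^] m)"
proof (cases "carrier G = {\<one>}")
  case True
  hence "conjugate G (g [^] gcd a b) (D [^] (0::int))"
    using g unfolding conjugate_def by auto
  thus ?thesis by blast
next
  case nontrivial: False
  define d where "d = gcd a b"
  obtain a' b' where ab: "a = d * a'" "b = d * b'" unfolding d_def by (meson gcd_dvd1 gcd_dvd2 dvdE)
  have coprime: "coprime a' b'" using ab a unfolding d_def by (metis div_gcd_coprime gcd_eq_0_iff nonzero_mult_div_cancel_left)
  have c1: "conjugate G (g [^] (a * b')) (D [^] (m1 * b'))"
    using conjugate_int_pow[OF m1, of b'] g by (simp add: int_pow_pow)
  have c2: "conjugate G (g [^] (a * b')) (D [^] (m2 * a'))"
    using conjugate_int_pow[OF m2, of a'] g ab by (simp add: int_pow_pow algebra_simps)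
  have "conjugate G (D [^] (m1 * b')) (D [^] (m2 * a'))"
    using conjugate_trans[OF conjugate_sym[OF c1] c2] g by simp
  hence "m1 * b' = m2 * a'" using Delta_pow_conjugate_eq nontrivial by blast
  then obtain c where c: "m1 = a' * c"
    using coprime by (metis coprime_commute coprime_dvd_mult_left_iff dvd_triv_right dvdE)
  have "conjugate G ((g [^] d) [^] a') (D [^] (a' * c))" using m1 ab c g by (simp add: int_pow_pow)
  moreover have "a' \<noteq> 0" using a ab by simp
  ultimately have "conjugate G (g [^] d) (D [^] c)"
    using conjugate_root_Delta_pow g by simp
  thus ?thesis unfolding d_def by blast
qed

end

theorem mainTheorem6:
  fixes G :: "('a, 'b) monoid_scheme" and P :: "'a set" and D g :: 'a and a b k :: int
  assumes "garside_group G P D" and "g \<in> carrier G"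
    and "a \<noteq> 0" and "b \<noteq> 0" and "k \<noteq> 0"
  shows "(conjugate G (g [^]\<^bsub>G\<^esub> (k * b)) (D [^]\<^bsub>G\<^esub> (k * a))
            \<longrightarrow> conjugate G (g [^]\<^bsub>G\<^esub> b) (D [^]\<^bsub>G\<^esub> a))
       \<and> ((\<exists>m::int. conjugate G (g [^]\<^bsub>G\<^esub> a) (D [^]\<^bsub>G\<^esub> m)) \<and>
          (\<exists>m::int. conjugate G (g [^]\<^bsub>G\<^esub> b) (D [^]\<^bsub>G\<^esub> m))
            \<longrightarrow> (\<exists>m::int. conjugate G (g [^]\<^bsub>G\<^esub> gcd a b) (D [^]\<^bsub>G\<^esub> m)))"
proof -
  interpret garside G P D by (rule garside.intro) (rule assms(1))
  have "(g [^]\<^bsub>G\<^esub> b) [^]\<^bsub>G\<^esub> k = g [^]\<^bsub>G\<^esub> (k * b)"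
    using assms(2) by (simp add: int_pow_pow mult.commute)
  hence part_i: "conjugate G (g [^]\<^bsub>G\<^esub> (k * b)) (D [^]\<^bsub>G\<^esub> (k * a))
      \<longrightarrow> conjugate G (g [^]\<^bsub>G\<^esub> b) (D [^]\<^bsub>G\<^esub> a)"
    using conjugate_root_Delta_pow[of "g [^]\<^bsub>G\<^esub> b" k a] assms(2,5) by simp
  have part_ii: "(\<exists>m::int. conjugate G (g [^]\<^bsub>G\<^esub> a) (D [^]\<^bsub>G\<^esub> m))
      \<and> (\<exists>m::int. conjugate G (g [^]\<^bsub>G\<^esub> b) (D [^]\<^bsub>G\<^esub> m))
      \<longrightarrow> (\<exists>m::int. conjugate G (g [^]\<^bsub>G\<^esub> gcd a b) (D [^]\<^bsub>G\<^esub> m))"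
    using gcd_power_conjugate assms(2,3) by blast
  show ?thesis using part_i part_ii by blast
qed

end
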